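(* Consider the second-order Kuramoto model with bonding force $$\dot\theta_i=\omega_i,\qquad \dot\omega_i=\frac{1}{N}\sum_{j=1}^N\big[\kappa_0\cos(\theta_j-\theta_i)+\kappa_1\big](\omega_j-\omega_i)+\frac{\kappa_2}{N}\sum_{j=1}^N\big[|\theta_j-\theta_i|-\theta^\infty_{ij}\big]\operatorname{sgn}(\theta_j-\theta_i),\quad i\in[N].$$ Suppose $(\Theta^0,W^0)\in\mathcal{S}$, $\mathcal{E}(0)<\frac{\kappa_2(\min_{i\ne j}\theta^\infty_{ij})^2}{2N}$, $\kappa_0\cos\mathcal{U}+\kappa_1>0$, $\kappa_2>0$, $\sum_{i=1}^N\omega_i^0=0$, and let $\{(\theta_i,\omega_i)\}$ be a global smooth solution. Then there exists a nonnegative constant $\mathcal{E}^\infty$ such that $$\lim_{t\to\infty}\mathcal{E}_k(t)=0,\qquad \lim_{t\to\infty}\mathcal{E}_p(t)=\mathcal{E}^\infty,\qquad \lim_{t\to\infty}\mathcal{E}(t)=\mathcal{E}^\infty.$$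
   Context: $N\ge2$, $\kappa_0,\kappa_1\ge0$; $[\theta^\infty_{ij}]$ real symmetric with zero diagonal; $\operatorname{sgn}$ the sign function; $\omega_i^0=\omega_i(0)$. Kinetic energy $\mathcal{E}_k:=\frac12\sum_i|\omega_i|^2$, potential energy $\mathcal{E}_p:=\frac{\kappa_2}{4N}\sum_{i,j}(|\theta_j-\theta_i|-\theta^\infty_{ij})^2$, total energy $\mathcal{E}:=\mathcal{E}_k+\mathcal{E}_p$. $\mathcal{U}:=\max_{i\ne j}\theta^\infty_{ij}+\sqrt{2N\mathcal{E}(0)/\kappa_2}$; $\mathcal{S}:=\{(\Theta,W)\in\mathbb{R}^{2N}:|\theta_i-\theta_j|<\mathcal{U}<\pi\ \forall i,j\}$. *)

theory Defs
  imports "HOL-Analysis.Analysis"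
begin

text \<open>Oscillators are indexed by 0..<N. A state is given by phases and frequencies
  as functions of type nat => real.\<close>

definition kin_energy :: "nat \<Rightarrow> (nat \<Rightarrow> real) \<Rightarrow> real" where
  "kin_energy N w = (1/2) * (\<Sum>i<N. (w i)\<^sup>2)"

definition pot_energy :: "nat \<Rightarrow> real \<Rightarrow> (nat \<Rightarrow> nat \<Rightarrow> real) \<Rightarrow> (nat \<Rightarrow> real) \<Rightarrow> real" where
  "pot_energy N k2 thinf th =
     k2 / (4 * real N) * (\<Sum>i<N. \<Sum>j<N. (\<bar>th j - th i\<bar> - thinf i j)\<^sup>2)"

definition tot_energy :: "nat \<Rightarrow> real \<Rightarrow> (nat \<Rightarrow> nat \<Rightarrow> real) \<Rightarrow> (nat \<Rightarrow> real) \<Rightarrow> (nat \<Rightarrow> real) \<Rightarrow> real" where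
  "tot_energy N k2 thinf th w = kin_energy N w + pot_energy N k2 thinf th"

definition max_offdiag :: "nat \<Rightarrow> (nat \<Rightarrow> nat \<Rightarrow> real) \<Rightarrow> real" where
  "max_offdiag N thinf = Max {thinf i j | i j. i < N \<and> j < N \<and> i \<noteq> j}"

definition min_offdiag :: "nat \<Rightarrow> (nat \<Rightarrow> nat \<Rightarrow> real) \<Rightarrow> real" where
  "min_offdiag N thinf = Min {thinf i j | i j. i < N \<and> j < N \<and> i \<noteq> j}"

definition U_const :: "nat \<Rightarrow> real \<Rightarrow> (nat \<Rightarrow> nat \<Rightarrow> real) \<Rightarrow> real \<Rightarrow> real" where
  "U_const N k2 thinf E0 = max_offdiag N thinf + sqrt (2 * real N * E0 / k2)"

definition in_S :: "nat \<Rightarrow> real \<Rightarrow> (nat \<Rightarrow> real) \<Rightarrow> bool" where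
  "in_S N U th \<longleftrightarrow> (\<forall>i<N. \<forall>j<N. \<bar>th i - th j\<bar> < U \<and> U < pi)"

definition smooth_on :: "real set \<Rightarrow> (real \<Rightarrow> real) \<Rightarrow> bool" where
  "smooth_on S f \<longleftrightarrow> (\<forall>n. \<forall>x\<in>S. ((deriv ^^ n) f) differentiable (at x))"

end

theory Submission
  imports Defs
begin

(* The total energy E is a Lyapunov function. Wherever the phases are pairwise distinct,
   E' = -D with D = (1/2N) sum_ij a_ij (w_j - w_i)^2 and a_ij = k0 cos(theta_j - theta_i) + k1.
   As long as E(t) <= E(0), the potential energy forces
   | |theta_j - theta_i| - thinf_ij | <= sqrt (2 N E(0) / k2) < min thinf for every pair i ~= j,
   so the phases stay distinct, |theta_j - theta_i| <= U < pi and a_ij >= k0 cos U + k1 > 0;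
   a continuity argument then keeps E(t) <= E(0) for all time, so E decreases to a limit.
   Momentum is conserved, hence sum_i w_i = 0 and D >= 2 (k0 cos U + k1) E_k.  E_k has a
   bounded derivative, so it is Lipschitz, and a Barbalat-type argument forces E_k -> 0;
   E_p = E - E_k then has the same limit as E. *)

lemma DERIV_abs_nonzero:
  fixes y :: real
  assumes "y \<noteq> 0"
  shows "(abs has_real_derivative sgn y) (at y)"
proof (cases "y > 0")
  case True
  have "(abs has_real_derivative 1) (at y)"
    by (rule has_field_derivative_transform_within_open[OF DERIV_ident, of "{0<..}"])
       (use True in auto)
  with True show ?thesis
    by simp
next
  case False
  with assms have "y < 0" by simp
  have "(abs has_real_derivative - 1) (at y)"
    by (rule has_field_derivative_transform_within_open[OF DERIV_minus[OF DERIV_ident], of "{..<0}"])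
       (use \<open>y < 0\<close> in auto)
  with \<open>y < 0\<close> show ?thesis
    by simp
qed

lemma DERIV_le_imp_diff_le:
  fixes f f' :: "real \<Rightarrow> real"
  assumes "a \<le> b"
    and "\<And>x. x \<in> {a..b} \<Longrightarrow> (f has_real_derivative f' x) (at x within {a..b})"
    and "\<And>x. x \<in> {a..b} \<Longrightarrow> f' x \<le> B"
  shows "f b - f a \<le> B * (b - a)"
proof -
  obtain x where "x \<in> {a..b}" "f b - f a = f' x * (b - a)"
    using mvt_very_simple[OF assms(1), of f "\<lambda>x h. f' x * h"] assms(2)
    by (auto simp: has_field_derivative_def)
  moreover have "f' x * (b - a) \<le> B * (b - a)"
    using assms(1,3) \<open>x \<in> {a..b}\<close> by (simp add: mult_right_mono)
  ultimately show ?thesis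
    by simp
qed

lemma continuous_induction_le_initial:
  fixes f :: "real \<Rightarrow> real"
  assumes cont: "continuous_on {a..} f"
    and step: "\<And>t. a \<le> t \<Longrightarrow> f t \<le> f a \<Longrightarrow> \<exists>b>t. \<forall>x\<in>{t..b}. f x \<le> f t"
    and "a \<le> t"
  shows "f t \<le> f a"
proof (rule ccontr)
  assume "\<not> f t \<le> f a"
  define S where "S = {a..t} \<inter> f -` {..f a}"
  have "closed S"
    unfolding S_def
    by (rule continuous_closed_preimage) (auto intro: continuous_on_subset[OF cont])
  moreover have "a \<in> S" "bdd_above S"
    using \<open>a \<le> t\<close> by (auto simp: S_def)
  ultimately have "Sup S \<in> S"
    by (intro closed_contains_Sup) auto
  then have s: "a \<le> Sup S" "Sup S < t" "f (Sup S) \<le> f a"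
    using \<open>\<not> f t \<le> f a\<close> by (auto simp: S_def less_le)
  then obtain b where b: "b > Sup S" "\<forall>x\<in>{Sup S..b}. f x \<le> f (Sup S)"
    using step by blast
  have "min b t \<in> {Sup S..b}"
    using b(1) s(2) by simp
  then have "f (min b t) \<le> f a"
    using b(2) s(3) by fastforce
  then have "min b t \<in> S"
    using b(1) s(1) \<open>a \<le> t\<close> by (simp add: S_def)
  then have "min b t \<le> Sup S"
    using \<open>bdd_above S\<close> by (rule cSup_upper)
  with b s show False
    by simp
qed

lemma antitone_tendsto_Inf:
  fixes f :: "real \<Rightarrow> real"
  assumes antitone: "\<And>s t. a \<le> s \<Longrightarrow> s \<le> t \<Longrightarrow> f t \<le> f s"
    and bdd: "bdd_below (f ` {a..})"
  shows "(f \<longlongrightarrow> Inf (f ` {a..})) at_top"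
proof (rule decreasing_tendsto)
  show "\<forall>\<^sub>F t in at_top. Inf (f ` {a..}) \<le> f t"
    using eventually_ge_at_top[of a] by eventually_elim (use bdd in \<open>auto intro: cInf_lower\<close>)
  fix y assume "Inf (f ` {a..}) < y"
  then obtain s where "a \<le> s" "f s < y"
    using bdd by (subst (asm) cInf_less_iff) auto
  show "\<forall>\<^sub>F t in at_top. f t < y"
    using eventually_ge_at_top[of s] by eventually_elim (meson antitone \<open>a \<le> s\<close> \<open>f s < y\<close> le_less_trans)
qed

lemma eventually_at_right_imp_interval:
  fixes t :: real
  assumes "P t" "\<forall>\<^sub>F x in at_right t. P x"
  shows "\<exists>b>t. \<forall>x\<in>{t..b}. P x"
proof -
  obtain b where "b > t" and b: "\<And>y. t < y \<Longrightarrow> y < b \<Longrightarrow> P y"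
    using assms(2) by (auto simp: eventually_at_right_field)
  have "P x" if "x \<in> {t..(t + b) / 2}" for x
  proof -
    from that \<open>b > t\<close> have "x = t \<or> t < x \<and> x < b"
      by auto
    with assms(1) b show "P x"
      by blast
  qed
  with \<open>b > t\<close> show ?thesis
    by (intro exI[of _ "(t + b) / 2"]) auto
qed

lemma dissipation_drop:
  fixes V V' f :: "real \<Rightarrow> real"
  assumes V_deriv: "\<And>t. 0 \<le> t \<Longrightarrow> (V has_real_derivative V' t) (at t within {0..})"
    and dissipation: "\<And>t. 0 \<le> t \<Longrightarrow> V' t \<le> - c * f t" and "0 \<le> c"
    and f_lipschitz: "M-lipschitz_on {0..} f"
    and "0 \<le> t" "0 \<le> h" "\<epsilon> \<le> f t" "M * h \<le> \<epsilon> / 2"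
  shows "V (t + h) \<le> V t - c * \<epsilon> / 2 * h"
proof -
  have f_large: "\<epsilon> / 2 \<le> f y" if "y \<in> {t..t+h}" for y
  proof -
    have "f t - f y \<le> M * (y - t)"
      using lipschitz_onD[OF f_lipschitz, of t y] that \<open>0 \<le> t\<close> by (auto simp: dist_real_def)
    also have "\<dots> \<le> M * h"
      using that lipschitz_on_nonneg[OF f_lipschitz] by (intro mult_left_mono) auto
    finally show ?thesis
      using assms(7,8) by linarith
  qed
  have "V (t + h) - V t \<le> - (c * \<epsilon> / 2) * (t + h - t)"
  proof (rule DERIV_le_imp_diff_le)
    fix y assume y: "y \<in> {t..t+h}"
    show "(V has_real_derivative V' y) (at y within {t..t+h})"
      by (rule DERIV_subset[OF V_deriv]) (use y \<open>0 \<le> t\<close> in auto)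
    have "c * (\<epsilon> / 2) \<le> c * f y"
      using f_large[OF y] \<open>0 \<le> c\<close> by (intro mult_left_mono) auto
    then show "V' y \<le> - (c * \<epsilon> / 2)"
      using dissipation[of y] y \<open>0 \<le> t\<close> by auto
  qed (use \<open>0 \<le> h\<close> in simp)
  then show ?thesis
    by (simp add: field_simps)
qed

lemma lipschitz_dissipation_rate_tendsto_0:
  fixes V V' f :: "real \<Rightarrow> real"
  assumes V_deriv: "\<And>t. 0 \<le> t \<Longrightarrow> (V has_real_derivative V' t) (at t within {0..})"
    and dissipation: "\<And>t. 0 \<le> t \<Longrightarrow> V' t \<le> - c * f t" and "c > 0"
    and V_lim: "(V \<longlongrightarrow> l) at_top" and V_ge: "\<And>t. 0 \<le> t \<Longrightarrow> l \<le> V t"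
    and f_nonneg: "\<And>t. 0 \<le> t \<Longrightarrow> 0 \<le> f t"
    and f_lipschitz: "M-lipschitz_on {0..} f"
  shows "(f \<longlongrightarrow> 0) at_top"
proof (rule decreasing_tendsto)
  show "\<forall>\<^sub>F t in at_top. 0 \<le> f t"
    using eventually_ge_at_top[of 0] by eventually_elim (rule f_nonneg)
  fix \<epsilon> :: real assume "0 < \<epsilon>"
  define h where "h = \<epsilon> / (2 * (M + 1))"
  have "h > 0" "M * h \<le> \<epsilon> / 2"
    using \<open>0 < \<epsilon>\<close> lipschitz_on_nonneg[OF f_lipschitz] by (auto simp: h_def field_simps)
  have "\<forall>\<^sub>F t in at_top. V t < l + c * \<epsilon> / 2 * h"
    using order_tendstoD(2)[OF V_lim] \<open>0 < \<epsilon>\<close> \<open>c > 0\<close> \<open>h > 0\<close> by simp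
  moreover have "\<forall>\<^sub>F t in at_top. (0::real) \<le> t"
    by (rule eventually_ge_at_top)
  ultimately show "\<forall>\<^sub>F t in at_top. f t < \<epsilon>"
  proof eventually_elim
    case (elim t)
    show "f t < \<epsilon>"
    proof (rule ccontr)
      assume "\<not> f t < \<epsilon>"
      then have "V (t + h) \<le> V t - c * \<epsilon> / 2 * h"
        using \<open>c > 0\<close> \<open>h > 0\<close> \<open>M * h \<le> \<epsilon> / 2\<close> elim(2)
        by (intro dissipation_drop[OF V_deriv dissipation _ f_lipschitz]) auto
      moreover have "l \<le> V (t + h)"
        using V_ge elim \<open>h > 0\<close> by simp
      ultimately show False
        using elim(1) by linarith
    qed
  qed
qed

lemma sum_sum_antisym:
  fixes h :: "nat \<Rightarrow> nat \<Rightarrow> real" and x :: "nat \<Rightarrow> real"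
  assumes antisym: "\<And>i j. i < n \<Longrightarrow> j < n \<Longrightarrow> h j i = - h i j"
  shows "(\<Sum>i<n. \<Sum>j<n. x i * h i j) = - (\<Sum>i<n. \<Sum>j<n. (x j - x i) * h i j) / 2"
proof -
  have "(\<Sum>i<n. \<Sum>j<n. x i * h i j) = (\<Sum>j<n. \<Sum>i<n. x i * h i j)"
    by (rule sum.swap)
  also have "\<dots> = (\<Sum>j<n. \<Sum>i<n. - (x i * h j i))"
    by (intro sum.cong refl) (metis antisym lessThan_iff minus_mult_right minus_minus)
  also have "\<dots> = - (\<Sum>j<n. \<Sum>i<n. x i * h j i)"
    by (simp add: sum_negf)
  finally have "(\<Sum>i<n. \<Sum>j<n. x i * h i j) = - (\<Sum>i<n. \<Sum>j<n. x j * h i j)" .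
  then show ?thesis
    by (simp add: left_diff_distrib sum_subtractf)
qed

lemma sum_sum_antisym_eq_0:
  fixes h :: "nat \<Rightarrow> nat \<Rightarrow> real"
  assumes "\<And>i j. i < n \<Longrightarrow> j < n \<Longrightarrow> h j i = - h i j"
  shows "(\<Sum>i<n. \<Sum>j<n. h i j) = 0"
  using sum_sum_antisym[of n h "\<lambda>_. 1", OF assms] by simp

lemma sum_sum_ge_pair:
  fixes F :: "nat \<Rightarrow> nat \<Rightarrow> real"
  assumes nonneg: "\<And>i j. i < n \<Longrightarrow> j < n \<Longrightarrow> F i j \<ge> 0" and "i < n" "j < n" "i \<noteq> j"
  shows "F i j + F j i \<le> (\<Sum>i<n. \<Sum>j<n. F i j)"
proof -
  have "F i j + F j i = (\<Sum>(a,b)\<in>{(i,j),(j,i)}. F a b)"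
    using \<open>i \<noteq> j\<close> by simp
  also have "\<dots> \<le> (\<Sum>(a,b)\<in>{..<n}\<times>{..<n}. F a b)"
    by (rule sum_mono2) (use nonneg \<open>i < n\<close> \<open>j < n\<close> in auto)
  also have "\<dots> = (\<Sum>i<n. \<Sum>j<n. F i j)"
    by (rule sum.cartesian_product[symmetric])
  finally show ?thesis .
qed

lemma sum_sum_diff_square:
  fixes x :: "nat \<Rightarrow> real"
  shows "(\<Sum>i<n. \<Sum>j<n. (x j - x i)\<^sup>2) = 2 * real n * (\<Sum>i<n. (x i)\<^sup>2) - 2 * (\<Sum>i<n. x i)\<^sup>2"
  by (simp add: power2_eq_square algebra_simps sum.distrib sum_subtractf
      sum_distrib_left sum_distrib_right)

lemma abs_sum_lessThan_le:
  fixes f :: "nat \<Rightarrow> real"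
  assumes "\<And>j. j < n \<Longrightarrow> \<bar>f j\<bar> \<le> B"
  shows "\<bar>\<Sum>j<n. f j\<bar> \<le> real n * B"
proof -
  have "\<bar>\<Sum>j<n. f j\<bar> \<le> (\<Sum>j<n. \<bar>f j\<bar>)"
    by (rule sum_abs)
  also have "\<dots> \<le> real (card {..<n}) * B"
    by (rule sum_bounded_above) (use assms in auto)
  finally show ?thesis
    by simp
qed

lemma finite_offdiag:
  fixes thinf :: "nat \<Rightarrow> nat \<Rightarrow> real"
  shows "finite {thinf i j | i j. i < N \<and> j < N \<and> i \<noteq> j}"
proof -
  have "{thinf i j | i j. i < N \<and> j < N \<and> i \<noteq> j} \<subseteq> (\<lambda>(i, j). thinf i j) ` ({..<N} \<times> {..<N})"
    by auto
  then show ?thesis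
    by (rule finite_subset) auto
qed

lemma min_offdiag_le: "i < N \<Longrightarrow> j < N \<Longrightarrow> i \<noteq> j \<Longrightarrow> min_offdiag N thinf \<le> thinf i j"
  unfolding min_offdiag_def by (rule Min_le[OF finite_offdiag]) auto

lemma max_offdiag_ge: "i < N \<Longrightarrow> j < N \<Longrightarrow> i \<noteq> j \<Longrightarrow> thinf i j \<le> max_offdiag N thinf"
  unfolding max_offdiag_def by (rule Max_ge[OF finite_offdiag]) auto

lemma min_offdiag_attained:
  assumes "N \<ge> 2"
  obtains i j where "i < N" "j < N" "i \<noteq> j" "thinf i j = min_offdiag N thinf"
proof -
  have "thinf 0 1 \<in> {thinf i j | i j. i < N \<and> j < N \<and> i \<noteq> j}"
    using assms by force
  then have "min_offdiag N thinf \<in> {thinf i j | i j. i < N \<and> j < N \<and> i \<noteq> j}"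
    unfolding min_offdiag_def by (intro Min_in[OF finite_offdiag]) auto
  with that show ?thesis
    by auto
qed

locale bonded_kuramoto =
  fixes N :: nat and k0 k1 k2 :: real
    and thinf :: "nat \<Rightarrow> nat \<Rightarrow> real"
    and th w :: "nat \<Rightarrow> real \<Rightarrow> real"
  assumes N_ge_2: "N \<ge> 2"
    and k0_nonneg: "k0 \<ge> 0" and k1_nonneg: "k1 \<ge> 0" and k2_pos: "k2 > 0"
    and thinf_sym: "\<forall>i<N. \<forall>j<N. thinf i j = thinf j i"
    and ode: "\<forall>i<N. \<forall>t\<ge>0.
        ((th i) has_real_derivative w i t) (at t within {0..}) \<and>
        ((w i) has_real_derivative
           ((1 / real N) * (\<Sum>j<N. (k0 * cos (th j t - th i t) + k1) * (w j t - w i t))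
            + (k2 / real N) * (\<Sum>j<N. (\<bar>th j t - th i t\<bar> - thinf i j) * sgn (th j t - th i t))))
          (at t within {0..})"
begin

abbreviation Ek :: "real \<Rightarrow> real" where
  "Ek t \<equiv> kin_energy N (\<lambda>i. w i t)"

abbreviation Ep :: "real \<Rightarrow> real" where
  "Ep t \<equiv> pot_energy N k2 thinf (\<lambda>i. th i t)"

abbreviation E :: "real \<Rightarrow> real" where
  "E t \<equiv> tot_energy N k2 thinf (\<lambda>i. th i t) (\<lambda>i. w i t)"

definition coupling :: "nat \<Rightarrow> nat \<Rightarrow> real \<Rightarrow> real" where
  "coupling i j t = k0 * cos (th j t - th i t) + k1"

definition bond_force :: "nat \<Rightarrow> nat \<Rightarrow> real \<Rightarrow> real" where
  "bond_force i j t = (\<bar>th j t - th i t\<bar> - thinf i j) * sgn (th j t - th i t)"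

definition accel :: "nat \<Rightarrow> real \<Rightarrow> real" where
  "accel i t = (1 / real N) * (\<Sum>j<N. coupling i j t * (w j t - w i t))
     + (k2 / real N) * (\<Sum>j<N. bond_force i j t)"

definition dissipation :: "real \<Rightarrow> real" where
  "dissipation t = (1 / (2 * real N)) * (\<Sum>i<N. \<Sum>j<N. coupling i j t * (w j t - w i t)\<^sup>2)"

(* Where this holds, E' = - dissipation \<le> 0; the inequalities are strict so that the condition
   persists for a short time. *)
definition dissipative_at :: "real \<Rightarrow> bool" where
  "dissipative_at t \<longleftrightarrow>
     (\<forall>i<N. \<forall>j<N. (i \<noteq> j \<longrightarrow> th j t \<noteq> th i t) \<and> 0 < coupling i j t)"

lemma N_pos: "real N > 0"
  using N_ge_2 by simp

lemma phase_deriv: "0 \<le> t \<Longrightarrow> i < N \<Longrightarrow> (th i has_real_derivative w i t) (at t within {0..})"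
  using ode by blast

lemma velocity_deriv: "0 \<le> t \<Longrightarrow> i < N \<Longrightarrow> (w i has_real_derivative accel i t) (at t within {0..})"
  using ode unfolding accel_def coupling_def bond_force_def by blast

lemma coupling_sym: "coupling j i t = coupling i j t"
  by (simp add: coupling_def cos_diff mult.commute)

lemma bond_force_antisym:
  assumes "i < N" "j < N"
  shows "bond_force j i t = - bond_force i j t"
proof -
  have "sgn (th i t - th j t) = - sgn (th j t - th i t)"
    by (metis minus_diff_eq sgn_minus)
  with assms thinf_sym show ?thesis
    by (simp add: bond_force_def abs_minus_commute)
qed

lemma coupling_abs_le: "\<bar>coupling i j t\<bar> \<le> k0 + k1"
proof -
  have "\<bar>k0 * cos (th j t - th i t)\<bar> \<le> k0"
    using k0_nonneg abs_cos_le_one[of "th j t - th i t"] by (simp add: abs_mult mult_left_le)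
  then show ?thesis
    using abs_triangle_ineq[of "k0 * cos (th j t - th i t)" k1] k1_nonneg
    by (simp add: coupling_def)
qed

lemma sum_accel_eq_0: "(\<Sum>i<N. accel i t) = 0"
proof -
  have "(\<Sum>i<N. \<Sum>j<N. coupling i j t * (w j t - w i t)) = 0"
    by (rule sum_sum_antisym_eq_0) (simp add: coupling_sym algebra_simps)
  moreover have "(\<Sum>i<N. \<Sum>j<N. bond_force i j t) = 0"
    by (rule sum_sum_antisym_eq_0) (rule bond_force_antisym)
  ultimately show ?thesis
    by (simp add: accel_def sum.distrib flip: sum_distrib_left sum_divide_distrib)
qed

lemma momentum_conserved:
  assumes "0 \<le> t"
  shows "(\<Sum>i<N. w i t) = (\<Sum>i<N. w i 0)"
proof -
  have "((\<lambda>t. \<Sum>i<N. w i t) has_real_derivative (\<Sum>i<N. accel i x)) (at x within {0..})"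
    if "x \<in> {0..}" for x
    by (rule DERIV_sum) (use velocity_deriv that in auto)
  then have "((\<lambda>t. \<Sum>i<N. w i t) has_real_derivative 0) (at x within {0..})" if "x \<in> {0..}" for x
    using that by (simp add: sum_accel_eq_0)
  then obtain c where "\<forall>x\<in>{0..}. (\<Sum>i<N. w i x) = c"
    using has_field_derivative_zero_constant[OF convex_real_interval(1)] by blast
  with assms show ?thesis
    by simp
qed

lemma kin_energy_deriv:
  assumes "0 \<le> t"
  shows "(Ek has_real_derivative (\<Sum>i<N. w i t * accel i t)) (at t within {0..})"
proof -
  have "((\<lambda>t. (w i t)\<^sup>2) has_real_derivative 2 * (w i t * accel i t)) (at t within {0..})"
    if "i \<in> {..<N}" for i
    using DERIV_power[OF velocity_deriv[OF assms], of i 2] that by (simp add: algebra_simps)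
  then have "((\<lambda>t. (1/2) * (\<Sum>i<N. (w i t)\<^sup>2)) has_real_derivative
      (1/2) * (\<Sum>i<N. 2 * (w i t * accel i t))) (at t within {0..})"
    by (intro DERIV_cmult DERIV_sum)
  then show ?thesis
    by (simp add: kin_energy_def flip: sum_distrib_left)
qed

lemma power_balance:
  "(\<Sum>i<N. w i t * accel i t) =
     - dissipation t - k2 / (2 * real N) * (\<Sum>i<N. \<Sum>j<N. (w j t - w i t) * bond_force i j t)"
proof -
  define Q where "Q = (\<Sum>i<N. \<Sum>j<N. coupling i j t * (w j t - w i t)\<^sup>2)"
  define R where "R = (\<Sum>i<N. \<Sum>j<N. (w j t - w i t) * bond_force i j t)"
  have "(\<Sum>i<N. w i t * (\<Sum>j<N. coupling i j t * (w j t - w i t)))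
      = - (\<Sum>i<N. \<Sum>j<N. (w j t - w i t) * (coupling i j t * (w j t - w i t))) / 2"
    unfolding sum_distrib_left
    by (rule sum_sum_antisym) (simp add: coupling_sym algebra_simps)
  also have "\<dots> = - Q / 2"
    unfolding Q_def by (simp add: power2_eq_square mult.left_commute)
  finally have coupling_part:
    "(\<Sum>i<N. w i t * (\<Sum>j<N. coupling i j t * (w j t - w i t))) = - Q / 2" .
  have bond_part: "(\<Sum>i<N. w i t * (\<Sum>j<N. bond_force i j t)) = - R / 2"
    unfolding R_def sum_distrib_left by (rule sum_sum_antisym) (rule bond_force_antisym)
  have "(\<Sum>i<N. w i t * accel i t)
      = (\<Sum>i<N. w i t * (\<Sum>j<N. coupling i j t * (w j t - w i t))) / real N
        + k2 * (\<Sum>i<N. w i t * (\<Sum>j<N. bond_force i j t)) / real N"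
    by (simp add: accel_def distrib_left sum.distrib mult.left_commute
        flip: sum_distrib_left sum_divide_distrib)
  then show ?thesis
    by (simp add: coupling_part bond_part dissipation_def flip: Q_def R_def)
qed

lemma bond_energy_deriv:
  assumes "0 \<le> t" "i < N" "j < N" "i \<noteq> j \<Longrightarrow> th j t \<noteq> th i t"
  shows "((\<lambda>t. (\<bar>th j t - th i t\<bar> - thinf i j)\<^sup>2) has_real_derivative
           2 * ((w j t - w i t) * bond_force i j t)) (at t within {0..})"
proof (cases "i = j")
  case True
  then show ?thesis
    by (simp add: bond_force_def)
next
  case False
  have "((\<lambda>t. \<bar>th j t - th i t\<bar>) has_real_derivative sgn (th j t - th i t) * (w j t - w i t))
      (at t within {0..})"
    using DERIV_chain2[OF DERIV_abs_nonzero DERIV_diff[OF phase_deriv phase_deriv]] assms False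
    by simp
  then show ?thesis
    by (auto intro!: derivative_eq_intros simp: bond_force_def algebra_simps)
qed

lemma pot_energy_deriv:
  assumes "0 \<le> t" and distinct: "\<And>i j. i < N \<Longrightarrow> j < N \<Longrightarrow> i \<noteq> j \<Longrightarrow> th j t \<noteq> th i t"
  shows "(Ep has_real_derivative
           k2 / (2 * real N) * (\<Sum>i<N. \<Sum>j<N. (w j t - w i t) * bond_force i j t))
         (at t within {0..})"
proof -
  have "((\<lambda>t. k2 / (4 * real N) * (\<Sum>i<N. \<Sum>j<N. (\<bar>th j t - th i t\<bar> - thinf i j)\<^sup>2))
      has_real_derivative
        k2 / (4 * real N) * (\<Sum>i<N. \<Sum>j<N. 2 * ((w j t - w i t) * bond_force i j t)))
      (at t within {0..})"
    using bond_energy_deriv[OF assms(1)] distinct by (intro DERIV_cmult DERIV_sum) auto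
  then show ?thesis
    by (simp add: pot_energy_def flip: sum_distrib_left)
qed

lemma energy_deriv:
  assumes "0 \<le> t" and "\<And>i j. i < N \<Longrightarrow> j < N \<Longrightarrow> i \<noteq> j \<Longrightarrow> th j t \<noteq> th i t"
  shows "(E has_real_derivative - dissipation t) (at t within {0..})"
  using DERIV_add[OF kin_energy_deriv pot_energy_deriv] assms
  by (simp add: tot_energy_def power_balance)

lemma pot_energy_pair_le:
  assumes "i < N" "j < N" "i \<noteq> j"
  shows "k2 / (2 * real N) * (\<bar>th j t - th i t\<bar> - thinf i j)\<^sup>2 \<le> Ep t"
proof -
  let ?G = "\<lambda>i j. (\<bar>th j t - th i t\<bar> - thinf i j)\<^sup>2"
  have "?G j i = ?G i j"
    using assms thinf_sym by (simp add: abs_minus_commute)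
  then have "2 * ?G i j \<le> (\<Sum>i<N. \<Sum>j<N. ?G i j)"
    using sum_sum_ge_pair[of N ?G i j] assms by simp
  then show ?thesis
    using k2_pos N_pos by (simp add: pot_energy_def field_simps)
qed

lemma energy_continuous: "continuous_on {0..} E"
proof -
  have "continuous_on {0..} (th i)" "continuous_on {0..} (w i)" if "i \<in> {..<N}" for i
    using phase_deriv velocity_deriv that by (auto intro!: DERIV_continuous_on)
  then show ?thesis
    unfolding tot_energy_def kin_energy_def pot_energy_def
    by (intro continuous_on_add continuous_on_mult_left continuous_on_sum continuous_on_power
        continuous_on_diff continuous_on_rabs continuous_on_const) auto
qed

lemma kin_energy_nonneg: "0 \<le> Ek t"
  by (simp add: kin_energy_def sum_nonneg)

lemma pot_energy_nonneg: "0 \<le> Ep t"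
  using k2_pos N_pos by (simp add: pot_energy_def sum_nonneg)

lemma energy_nonneg: "0 \<le> E t"
  using kin_energy_nonneg pot_energy_nonneg by (simp add: tot_energy_def)

lemma dissipation_ge_kin_energy:
  assumes "\<And>i j. i < N \<Longrightarrow> j < N \<Longrightarrow> c \<le> coupling i j t" and "(\<Sum>i<N. w i t) = 0"
  shows "2 * c * Ek t \<le> dissipation t"
proof -
  define Q where "Q = (\<Sum>i<N. \<Sum>j<N. coupling i j t * (w j t - w i t)\<^sup>2)"
  have "(\<Sum>i<N. \<Sum>j<N. c * (w j t - w i t)\<^sup>2) \<le> Q"
    unfolding Q_def using assms(1) by (intro sum_mono mult_right_mono) auto
  moreover have "(\<Sum>i<N. \<Sum>j<N. c * (w j t - w i t)\<^sup>2) = 2 * c * Ek t * (2 * real N)"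
    using sum_sum_diff_square[where n = N and x = "\<lambda>i. w i t"] assms(2)
    by (simp add: kin_energy_def flip: sum_distrib_left)
  moreover have "dissipation t = Q / (2 * real N)"
    by (simp add: dissipation_def Q_def)
  ultimately show ?thesis
    using N_pos by (simp add: pos_le_divide_eq)
qed

lemma dissipation_nonneg:
  assumes "\<And>i j. i < N \<Longrightarrow> j < N \<Longrightarrow> 0 \<le> coupling i j t"
  shows "0 \<le> dissipation t"
  unfolding dissipation_def using assms N_pos by (intro mult_nonneg_nonneg sum_nonneg) auto

lemma eventually_dissipative_at_right:
  assumes "0 \<le> t" "dissipative_at t"
  shows "\<forall>\<^sub>F x in at_right t. dissipative_at x"
proof -
  have gap_tendsto: "((\<lambda>x. th j x - th i x) \<longlongrightarrow> th j t - th i t) (at_right t)"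
    if "i < N" "j < N" for i j
  proof -
    have "((\<lambda>x. th j x - th i x) \<longlongrightarrow> th j t - th i t) (at t within {0..})"
      using DERIV_continuous[OF DERIV_diff[OF phase_deriv phase_deriv]] assms(1) that
      by (simp add: continuous_within)
    then show ?thesis
      by (rule tendsto_within_subset) (use assms(1) in auto)
  qed
  have "\<forall>\<^sub>F x in at_right t. (i \<noteq> j \<longrightarrow> th j x \<noteq> th i x) \<and> 0 < coupling i j x"
    if "i < N" "j < N" for i j
  proof -
    have "\<forall>\<^sub>F x in at_right t. i \<noteq> j \<longrightarrow> th j x \<noteq> th i x"
    proof (cases "i = j")
      case False
      then have "th j t - th i t \<noteq> 0"
        using assms(2) that by (auto simp: dissipative_at_def)
      from tendsto_imp_eventually_ne[OF gap_tendsto[OF that] this] show ?thesis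
        by eventually_elim simp
    qed simp
    moreover have "((\<lambda>x. coupling i j x) \<longlongrightarrow> coupling i j t) (at_right t)"
      unfolding coupling_def by (intro tendsto_intros gap_tendsto that)
    then have "\<forall>\<^sub>F x in at_right t. 0 < coupling i j x"
      by (rule order_tendstoD(1)) (use assms(2) that in \<open>simp add: dissipative_at_def\<close>)
    ultimately show ?thesis
      by eventually_elim auto
  qed
  then have "\<forall>\<^sub>F x in at_right t. \<forall>i\<in>{..<N}. \<forall>j\<in>{..<N}.
      (i \<noteq> j \<longrightarrow> th j x \<noteq> th i x) \<and> 0 < coupling i j x"
    by (intro eventually_ball_finite ballI) auto
  then show ?thesis
    by eventually_elim (simp add: dissipative_at_def)
qed

lemma energy_antitone_on:
  assumes "0 \<le> s" "s \<le> x" and dissipative: "\<forall>y\<in>{s..x}. dissipative_at y"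
  shows "E x \<le> E s"
proof -
  have "E x - E s \<le> 0 * (x - s)"
  proof (rule DERIV_le_imp_diff_le[OF \<open>s \<le> x\<close>])
    fix y assume y: "y \<in> {s..x}"
    then have "(E has_real_derivative - dissipation y) (at y within {0..})"
      using assms by (intro energy_deriv) (auto simp: dissipative_at_def)
    then show "(E has_real_derivative - dissipation y) (at y within {s..x})"
      by (rule DERIV_subset) (use assms(1) in auto)
    show "- dissipation y \<le> 0"
      using dissipative y by (auto simp: dissipative_at_def less_imp_le intro!: dissipation_nonneg)
  qed
  then show ?thesis
    by simp
qed

end

locale bonded_kuramoto_small_energy = bonded_kuramoto +
  assumes energy_small: "E 0 < k2 * (min_offdiag N thinf)\<^sup>2 / (2 * real N)"
    and U_less_pi: "U_const N k2 thinf (E 0) < pi"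
    and coupling_floor_pos: "0 < k0 * cos (U_const N k2 thinf (E 0)) + k1"
    and momentum_zero: "(\<Sum>i<N. w i 0) = 0"
begin

abbreviation offset_radius :: real where
  "offset_radius \<equiv> sqrt (2 * real N * E 0 / k2)"

abbreviation coupling_floor :: real where
  "coupling_floor \<equiv> k0 * cos (U_const N k2 thinf (E 0)) + k1"

lemma offset_bound:
  assumes "E t \<le> E 0" "i < N" "j < N" "i \<noteq> j"
  shows "\<bar>\<bar>th j t - th i t\<bar> - thinf i j\<bar> \<le> offset_radius"
proof (rule real_le_rsqrt)
  have "k2 / (2 * real N) * (\<bar>th j t - th i t\<bar> - thinf i j)\<^sup>2 \<le> E 0"
    using pot_energy_pair_le[OF assms(2-4), of t] kin_energy_nonneg[of t] assms(1)
    by (simp add: tot_energy_def)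
  then show "\<bar>\<bar>th j t - th i t\<bar> - thinf i j\<bar>\<^sup>2 \<le> 2 * real N * E 0 / k2"
    using k2_pos N_pos by (simp add: pos_divide_le_eq pos_le_divide_eq mult.commute)
qed

lemma offset_radius_less_min_offdiag: "offset_radius < min_offdiag N thinf"
proof -
  let ?m = "min_offdiag N thinf"
  have "2 * real N * E 0 / k2 < ?m\<^sup>2"
    using energy_small k2_pos N_pos by (simp add: pos_divide_less_eq pos_less_divide_eq mult.commute)
  then have radius_less: "offset_radius < \<bar>?m\<bar>"
    using real_sqrt_less_mono real_sqrt_abs by metis
  obtain i j where ij: "i < N" "j < N" "i \<noteq> j" "thinf i j = ?m"
    using min_offdiag_attained[OF N_ge_2] .
  have "\<bar>\<bar>th j 0 - th i 0\<bar> - ?m\<bar> < \<bar>?m\<bar>"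
    using offset_bound[of 0 i j] ij radius_less by simp
  \<comment> \<open>if ?m \<le> 0, the left-hand side would be at least \<bar>?m\<bar>\<close>
  then have "?m > 0"
    by linarith
  with radius_less show ?thesis
    by simp
qed

lemma phase_gap_bounds:
  assumes "E t \<le> E 0" "i < N" "j < N" "i \<noteq> j"
  shows "0 < \<bar>th j t - th i t\<bar>" "\<bar>th j t - th i t\<bar> \<le> U_const N k2 thinf (E 0)"
proof -
  have "thinf i j - offset_radius \<le> \<bar>th j t - th i t\<bar> \<and> \<bar>th j t - th i t\<bar> \<le> thinf i j + offset_radius"
    using offset_bound[OF assms] by (simp only: abs_diff_le_iff)
  moreover have "min_offdiag N thinf \<le> thinf i j" "thinf i j \<le> max_offdiag N thinf"
    using min_offdiag_le[OF assms(2-4)] max_offdiag_ge[OF assms(2-4)] by simp_all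
  ultimately show "0 < \<bar>th j t - th i t\<bar>" "\<bar>th j t - th i t\<bar> \<le> U_const N k2 thinf (E 0)"
    using offset_radius_less_min_offdiag unfolding U_const_def by linarith+
qed

lemma coupling_ge_floor:
  assumes "E t \<le> E 0" "i < N" "j < N"
  shows "coupling_floor \<le> coupling i j t"
proof (cases "i = j")
  case True
  then show ?thesis
    using k0_nonneg by (simp add: coupling_def mult_left_le)
next
  case False
  have "cos (U_const N k2 thinf (E 0)) \<le> cos \<bar>th j t - th i t\<bar>"
    using phase_gap_bounds[OF assms False] U_less_pi by (intro cos_monotone_0_pi_le) auto
  then show ?thesis
    using k0_nonneg by (simp add: coupling_def mult_left_mono)
qed

lemma dissipative_if_energy_le:
  assumes "E t \<le> E 0"
  shows "dissipative_at t"
  unfolding dissipative_at_def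
proof (intro allI impI conjI)
  fix i j assume "i < N" "j < N"
  show "th j t \<noteq> th i t" if "i \<noteq> j"
    using phase_gap_bounds(1)[OF assms \<open>i < N\<close> \<open>j < N\<close> that] by auto
  show "0 < coupling i j t"
    using coupling_ge_floor[OF assms \<open>i < N\<close> \<open>j < N\<close>] coupling_floor_pos by linarith
qed

lemma energy_le_initial: "0 \<le> t \<Longrightarrow> E t \<le> E 0"
proof (rule continuous_induction_le_initial[OF energy_continuous])
  fix s assume "0 \<le> s" "E s \<le> E 0"
  then obtain b where "b > s" and dissipative: "\<forall>x\<in>{s..b}. dissipative_at x"
    using eventually_at_right_imp_interval eventually_dissipative_at_right dissipative_if_energy_le
    by blast
  have "E x \<le> E s" if "x \<in> {s..b}" for x
  proof (rule energy_antitone_on[OF \<open>0 \<le> s\<close>])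
    show "s \<le> x" "\<forall>y\<in>{s..x}. dissipative_at y"
      using that dissipative by auto
  qed
  with \<open>b > s\<close> show "\<exists>b>s. \<forall>x\<in>{s..b}. E x \<le> E s"
    by blast
qed

lemma energy_antitone:
  assumes "0 \<le> s" "s \<le> t"
  shows "E t \<le> E s"
proof (rule energy_antitone_on[OF assms], intro ballI)
  fix y assume "y \<in> {s..t}"
  with assms(1) have "0 \<le> y"
    by simp
  then show "dissipative_at y"
    by (intro dissipative_if_energy_le energy_le_initial)
qed

lemma dissipation_ge_floor: "0 \<le> t \<Longrightarrow> 2 * coupling_floor * Ek t \<le> dissipation t"
  by (rule dissipation_ge_kin_energy)
    (use coupling_ge_floor energy_le_initial momentum_conserved momentum_zero in auto)

lemma velocity_bound:
  assumes "0 \<le> t" "i < N"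
  shows "\<bar>w i t\<bar> \<le> sqrt (2 * E 0)"
proof (rule real_le_rsqrt)
  have "(w i t)\<^sup>2 \<le> (\<Sum>j<N. (w j t)\<^sup>2)"
    by (rule member_le_sum) (use assms in auto)
  also have "\<dots> = 2 * Ek t"
    by (simp add: kin_energy_def)
  also have "\<dots> \<le> 2 * E 0"
    using energy_le_initial[OF assms(1)] pot_energy_nonneg[of t] by (simp add: tot_energy_def)
  finally show "\<bar>w i t\<bar>\<^sup>2 \<le> 2 * E 0"
    by simp
qed

lemma bond_force_bound:
  assumes "0 \<le> t" "i < N" "j < N"
  shows "\<bar>bond_force i j t\<bar> \<le> offset_radius"
proof (cases "i = j")
  case False
  have "\<bar>bond_force i j t\<bar> \<le> \<bar>\<bar>th j t - th i t\<bar> - thinf i j\<bar>"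
    by (simp add: bond_force_def abs_mult sgn_if)
  also have "\<dots> \<le> offset_radius"
    using offset_bound energy_le_initial assms False by blast
  finally show ?thesis .
qed (use energy_nonneg[of 0] k2_pos in \<open>simp add: bond_force_def\<close>)

lemma accel_bound:
  assumes "0 \<le> t" "i < N"
  shows "\<bar>accel i t\<bar> \<le> 2 * (k0 + k1) * sqrt (2 * E 0) + k2 * offset_radius"
proof -
  have "\<bar>coupling i j t * (w j t - w i t)\<bar> \<le> (k0 + k1) * (2 * sqrt (2 * E 0))" if "j < N" for j
  proof -
    have "\<bar>w j t - w i t\<bar> \<le> 2 * sqrt (2 * E 0)"
      using abs_triangle_ineq4[of "w j t" "w i t"] velocity_bound[OF assms] velocity_bound[OF assms(1) that]
      by linarith
    then show ?thesis
      unfolding abs_mult using coupling_abs_le[of i j t] k0_nonneg k1_nonneg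
      by (intro mult_mono) auto
  qed
  then have coupling_sum: "\<bar>\<Sum>j<N. coupling i j t * (w j t - w i t)\<bar>
      \<le> real N * ((k0 + k1) * (2 * sqrt (2 * E 0)))"
    by (rule abs_sum_lessThan_le)
  have bond_sum: "\<bar>\<Sum>j<N. bond_force i j t\<bar> \<le> real N * offset_radius"
    using bond_force_bound assms by (intro abs_sum_lessThan_le) auto
  have "\<bar>accel i t\<bar> \<le> \<bar>(1 / real N) * (\<Sum>j<N. coupling i j t * (w j t - w i t))\<bar>
      + \<bar>(k2 / real N) * (\<Sum>j<N. bond_force i j t)\<bar>"
    unfolding accel_def by (rule abs_triangle_ineq)
  also have "\<dots> = \<bar>\<Sum>j<N. coupling i j t * (w j t - w i t)\<bar> / real N
      + k2 * \<bar>\<Sum>j<N. bond_force i j t\<bar> / real N"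
    using k2_pos by (simp add: abs_mult)
  also have "\<dots> \<le> real N * ((k0 + k1) * (2 * sqrt (2 * E 0))) / real N
      + k2 * (real N * offset_radius) / real N"
    using coupling_sum bond_sum N_pos k2_pos
    by (intro add_mono divide_right_mono mult_left_mono) auto
  also have "\<dots> = (k0 + k1) * (2 * sqrt (2 * E 0)) + k2 * offset_radius"
    using N_pos by simp
  finally show ?thesis
    by (simp add: algebra_simps)
qed

lemma kin_energy_lipschitz: "\<exists>M. M-lipschitz_on {0..} Ek"
proof -
  define A where "A = 2 * (k0 + k1) * sqrt (2 * E 0) + k2 * offset_radius"
  define B where "B = real N * (sqrt (2 * E 0) * A)"
  have deriv_bound: "\<bar>\<Sum>i<N. w i t * accel i t\<bar> \<le> B" if "0 \<le> t" for t
  proof -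
    have "\<bar>w i t * accel i t\<bar> \<le> sqrt (2 * E 0) * A" if "i < N" for i
      unfolding abs_mult A_def
      using velocity_bound[OF \<open>0 \<le> t\<close> that] accel_bound[OF \<open>0 \<le> t\<close> that] energy_nonneg[of 0]
      by (intro mult_mono) auto
    then show ?thesis
      unfolding B_def by (rule abs_sum_lessThan_le)
  qed
  have "norm (Ek x - Ek y) \<le> B * norm (x - y)" if "x \<in> {0..}" "y \<in> {0..}" for x y
    by (rule field_differentiable_bound[OF convex_real_interval(1)])
      (use kin_energy_deriv deriv_bound that in auto)
  then have "dist (Ek x) (Ek y) \<le> B * dist x y" if "x \<in> {0..}" "y \<in> {0..}" for x y
    using that by (simp add: dist_norm)
  moreover have "0 \<le> B"
    using deriv_bound[of 0] by simp
  ultimately show ?thesis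
    by (auto intro: lipschitz_onI)
qed

theorem energy_limits:
  "\<exists>Einf \<ge> 0. (Ek \<longlongrightarrow> 0) at_top \<and> (Ep \<longlongrightarrow> Einf) at_top \<and> (E \<longlongrightarrow> Einf) at_top"
proof -
  define L where "L = Inf (E ` {0..})"
  have bdd: "bdd_below (E ` {0..})"
    by (rule bdd_belowI[of _ 0]) (auto intro: energy_nonneg)
  have E_lim: "(E \<longlongrightarrow> L) at_top"
    unfolding L_def using energy_antitone bdd by (rule antitone_tendsto_Inf)
  have L_le: "L \<le> E t" if "0 \<le> t" for t
    unfolding L_def using bdd that by (auto intro: cInf_lower)
  obtain M where "M-lipschitz_on {0..} Ek"
    using kin_energy_lipschitz by blast
  have "(Ek \<longlongrightarrow> 0) at_top"
  proof (rule lipschitz_dissipation_rate_tendsto_0[OF _ _ _ E_lim L_le kin_energy_nonneg])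
    show "(E has_real_derivative - dissipation t) (at t within {0..})" if "0 \<le> t" for t
      using energy_deriv dissipative_if_energy_le energy_le_initial that
      by (auto simp: dissipative_at_def)
    show "- dissipation t \<le> - (2 * coupling_floor) * Ek t" if "0 \<le> t" for t
      using dissipation_ge_floor[OF that] by (simp only: mult_minus_left neg_le_iff_le)
  qed (use coupling_floor_pos \<open>M-lipschitz_on {0..} Ek\<close> in auto)
  moreover have "(Ep \<longlongrightarrow> L - 0) at_top"
    using tendsto_diff[OF E_lim \<open>(Ek \<longlongrightarrow> 0) at_top\<close>] by (simp add: tot_energy_def)
  moreover have "0 \<le> L"
    unfolding L_def using energy_nonneg by (auto intro: cInf_greatest)
  ultimately show ?thesis
    using E_lim by auto
qed

end

theorem corollary3p2:
  fixes N :: nat and k0 k1 k2 :: real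
    and thinf :: "nat \<Rightarrow> nat \<Rightarrow> real"
    and th w :: "nat \<Rightarrow> real \<Rightarrow> real"
  assumes N2: "N \<ge> 2"
    and k0: "k0 \<ge> 0" and k1: "k1 \<ge> 0" and k2: "k2 > 0"
    and sym: "\<forall>i<N. \<forall>j<N. thinf i j = thinf j i"
    and diag: "\<forall>i<N. thinf i i = 0"
    and ode: "\<forall>i<N. \<forall>t\<ge>0.
        ((th i) has_real_derivative w i t) (at t within {0..}) \<and>
        ((w i) has_real_derivative
           ((1 / real N) * (\<Sum>j<N. (k0 * cos (th j t - th i t) + k1) * (w j t - w i t))
            + (k2 / real N) * (\<Sum>j<N. (\<bar>th j t - th i t\<bar> - thinf i j) * sgn (th j t - th i t))))
          (at t within {0..})"
    and smooth: "\<forall>i<N. smooth_on {0<..} (th i) \<and> smooth_on {0<..} (w i)"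
    and initS: "in_S N (U_const N k2 thinf (tot_energy N k2 thinf (\<lambda>i. th i 0) (\<lambda>i. w i 0)))
                  (\<lambda>i. th i 0)"
    and E0: "tot_energy N k2 thinf (\<lambda>i. th i 0) (\<lambda>i. w i 0)
               < k2 * (min_offdiag N thinf)\<^sup>2 / (2 * real N)"
    and coup: "k0 * cos (U_const N k2 thinf (tot_energy N k2 thinf (\<lambda>i. th i 0) (\<lambda>i. w i 0))) + k1 > 0"
    and sum0: "(\<Sum>i<N. w i 0) = 0"
  shows "\<exists>Einf \<ge> 0.
           ((\<lambda>t. kin_energy N (\<lambda>i. w i t)) \<longlongrightarrow> 0) at_top \<and>
           ((\<lambda>t. pot_energy N k2 thinf (\<lambda>i. th i t)) \<longlongrightarrow> Einf) at_top \<and>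
           ((\<lambda>t. tot_energy N k2 thinf (\<lambda>i. th i t) (\<lambda>i. w i t)) \<longlongrightarrow> Einf) at_top"
proof -
  have "U_const N k2 thinf (tot_energy N k2 thinf (\<lambda>i. th i 0) (\<lambda>i. w i 0)) < pi"
    using initS[unfolded in_S_def, rule_format, of 0 0] N2 by simp
  then interpret bonded_kuramoto_small_energy N k0 k1 k2 thinf th w
    by unfold_locales (use N2 k0 k1 k2 sym ode E0 coup sum0 in auto)
  show ?thesis
    by (rule energy_limits)
qed

end
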